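(* Let $b>a>0$, $c>0$, $u_L<0$, $\bar\Delta_H,\bar\Delta_L>0$, $L_0>0$, and $L_t=L_0e^{(b-a)t}$. The integro-differential equation $$\rho'(t)=\frac{b(-u_L)-c-L_tc+b\bar\Delta_L\int_0^te^{-bs}\rho'(s)\,ds-L_t\bar\Delta_Hae^{-at}(1-\rho(t))}{L_t\bar\Delta_He^{-at}+\bar\Delta_Le^{-bt}}$$ with initial condition $\rho(0)=0$ has a unique (continuously differentiable) solution defined for all $t\in[0,\infty)$.
   Context: Here $L_0=\frac{p_0}{1-p_0}$ is the prior likelihood ratio of state $H$; the equation expresses that a player is indifferent between taking $R$ now and continuing to acquire information when the opponent stops with $R$ according to $\rho$. *)

theory Defs
  imports "HOL-Analysis.Analysis"
begin

definition Lpath :: "real \<Rightarrow> real \<Rightarrow> real \<Rightarrow> real \<Rightarrow> real" where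
  "Lpath a b L0 t = L0 * exp ((b - a) * t)"

definition is_solution ::
  "real \<Rightarrow> real \<Rightarrow> real \<Rightarrow> real \<Rightarrow> real \<Rightarrow> real \<Rightarrow> real \<Rightarrow>
   (real \<Rightarrow> real) \<Rightarrow> (real \<Rightarrow> real) \<Rightarrow> bool" where
  "is_solution a b c uL DH DL L0 \<rho> \<rho>' \<longleftrightarrow>
     \<rho> 0 = 0 \<and>
     continuous_on {0..} \<rho>' \<and>
     (\<forall>t\<ge>0. (\<rho> has_real_derivative \<rho>' t) (at t within {0..})) \<and>
     (\<forall>t\<ge>0. \<rho>' t =
        (b * (- uL) - c - Lpath a b L0 t * c
          + b * DL * integral {0..t} (\<lambda>s. exp (- b * s) * \<rho>' s)
          - Lpath a b L0 t * DH * a * exp (- a * t) * (1 - \<rho> t))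
        / (Lpath a b L0 t * DH * exp (- a * t) + DL * exp (- b * t)))"

end

theory Submission
  imports Defs
begin

text \<open>
  With rho(t) the integral of rho' over [0, t], the equation is a fixed-point problem
  rho' = F(rho') for a causal operator F whose memory enters only through the integral of
  exp(-b s) rho'(s) and through a rho(t). In the weighted sup norm sup exp(-M t) |rho'(t)|
  with M = 4(a + b) these two terms make F Lipschitz with constant b/(M - b) + a/M < 1, so
  Banach's fixed-point theorem yields a solution; the same estimate on a compact interval
  [0, T] forces any two solutions to agree there.
\<close>

lemma abs_integral_exp_weighted_le:
  fixes f :: "real \<Rightarrow> real"
  assumes "k < M" and "0 \<le> t" and f: "continuous_on {0..t} f"
    and bound: "\<And>s. s \<in> {0..t} \<Longrightarrow> \<bar>f s\<bar> \<le> m * exp (M * s)"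
  shows "\<bar>integral {0..t} (\<lambda>s. exp (- k * s) * f s)\<bar> \<le> m * exp ((M - k) * t) / (M - k)"
proof -
  define K where "K = M - k"
  have K: "0 < K" using assms by (simp add: K_def)
  have m: "0 \<le> m" using bound[of 0] \<open>0 \<le> t\<close> abs_ge_zero[of "f 0"] by simp
  have primitive: "((\<lambda>s. exp (K * s)) has_integral (exp (K * t) - 1) / K) {0..t}"
  proof -
    have "((\<lambda>s. exp (K * s)) has_integral exp (K * t) / K - exp (K * 0) / K) {0..t}"
    proof (rule fundamental_theorem_of_calculus)
      fix x assume "x \<in> {0..t}"
      have "((\<lambda>s. exp (K * s) / K) has_real_derivative exp (K * x)) (at x within {0..t})"
        using K by (auto intro!: derivative_eq_intros)
      then show "((\<lambda>s. exp (K * s) / K) has_vector_derivative exp (K * x)) (at x within {0..t})"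
        by (simp add: has_real_derivative_iff_has_vector_derivative)
    qed (use assms in auto)
    then show ?thesis by (simp add: diff_divide_distrib)
  qed
  have "\<bar>integral {0..t} (\<lambda>s. exp (- k * s) * f s)\<bar> \<le> integral {0..t} (\<lambda>s. m * exp (K * s))"
    unfolding real_norm_def[symmetric]
  proof (rule integral_norm_bound_integral)
    show "(\<lambda>s. exp (- k * s) * f s) integrable_on {0..t}"
      by (intro integrable_continuous_interval continuous_intros f)
    show "(\<lambda>s. m * exp (K * s)) integrable_on {0..t}"
      by (intro integrable_continuous_interval continuous_intros)
    fix s assume s: "s \<in> {0..t}"
    have "norm (exp (- k * s) * f s) \<le> exp (- k * s) * (m * exp (M * s))"
      using bound[OF s] by (simp add: abs_mult mult_left_mono)
    also have "\<dots> = m * exp (K * s)"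
      by (simp add: K_def algebra_simps flip: exp_add)
    finally show "norm (exp (- k * s) * f s) \<le> m * exp (K * s)" .
  qed
  also have "\<dots> = m * ((exp (K * t) - 1) / K)"
    using primitive by (simp add: integral_unique)
  also have "\<dots> \<le> m * exp (K * t) / K"
    using m K by (simp add: mult_left_mono divide_right_mono)
  finally show ?thesis by (simp add: K_def)
qed

lemma continuous_on_integral_max0:
  fixes f :: "real \<Rightarrow> real"
  assumes "continuous_on UNIV f"
  shows "continuous_on S (\<lambda>t. integral {0..max 0 t} f)"
proof -
  have "isCont (\<lambda>t. integral {0..max 0 t} f) x" for x
  proof -
    define T where "T = \<bar>x\<bar> + 1"
    have "continuous_on {0..T} (\<lambda>t. integral {0..t} f)"
      by (intro indefinite_integral_continuous_1 integrable_continuous_interval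
          continuous_on_subset[OF assms]) auto
    then have "continuous_on {-T..T} ((\<lambda>t. integral {0..t} f) \<circ> (\<lambda>t. max 0 t))"
      by (intro continuous_on_compose[OF _ continuous_on_subset])
        (auto intro!: continuous_intros simp: T_def)
    moreover have "x \<in> interior {-T..T}" unfolding T_def by auto
    ultimately show ?thesis
      using continuous_on_interior by (fastforce simp: o_def)
  qed
  then show ?thesis by (simp add: continuous_at_imp_continuous_on)
qed

lemma is_solution_integral:
  assumes "is_solution a b c uL DH DL L0 \<rho> \<rho>'" and "0 \<le> t"
  shows "\<rho> t = integral {0..t} \<rho>'" and "continuous_on {0..t} \<rho>'"
proof -
  have deriv: "\<forall>x\<ge>0. (\<rho> has_real_derivative \<rho>' x) (at x within {0..})"
    and "\<rho> 0 = 0" and cont: "continuous_on {0..} \<rho>'"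
    using assms(1) unfolding is_solution_def by auto
  have "(\<rho>' has_integral \<rho> t - \<rho> 0) {0..t}"
  proof (rule fundamental_theorem_of_calculus[OF assms(2)])
    fix x assume "x \<in> {0..t}"
    then have "(\<rho> has_real_derivative \<rho>' x) (at x within {0..t})"
      using deriv by (auto intro: DERIV_subset)
    then show "(\<rho> has_vector_derivative \<rho>' x) (at x within {0..t})"
      by (simp add: has_real_derivative_iff_has_vector_derivative)
  qed
  then show "\<rho> t = integral {0..t} \<rho>'" using \<open>\<rho> 0 = 0\<close> by (simp add: integral_unique)
  show "continuous_on {0..t} \<rho>'" using cont by (rule continuous_on_subset) auto
qed

locale ide_coefficients =
  fixes a b c uL DH DL L0 :: real
  assumes a_pos: "0 < a" and b_pos: "0 < b"
    and DH_pos: "0 < DH" and DL_pos: "0 < DL" and L0_pos: "0 < L0"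
begin

definition rhs :: "real \<Rightarrow> (real \<Rightarrow> real) \<Rightarrow> real \<Rightarrow> real" where
  "rhs r u t =
     (b * (- uL) - c - Lpath a b L0 t * c
       + b * DL * integral {0..t} (\<lambda>s. exp (- b * s) * u s)
       - Lpath a b L0 t * DH * a * exp (- a * t) * (1 - r))
     / (Lpath a b L0 t * DH * exp (- a * t) + DL * exp (- b * t))"

definition wH :: "real \<Rightarrow> real" where
  "wH t = Lpath a b L0 t * DH * exp (- a * t)"

definition wL :: "real \<Rightarrow> real" where
  "wL t = DL * exp (- b * t)"

lemma wH_pos: "0 < wH t" and wL_pos: "0 < wL t"
  using DH_pos DL_pos L0_pos by (simp_all add: wH_def wL_def Lpath_def)

lemma is_solution_iff:
  "is_solution a b c uL DH DL L0 \<rho> \<rho>' \<longleftrightarrow>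
     \<rho> 0 = 0 \<and> continuous_on {0..} \<rho>' \<and>
     (\<forall>t\<ge>0. (\<rho> has_real_derivative \<rho>' t) (at t within {0..})) \<and>
     (\<forall>t\<ge>0. \<rho>' t = rhs (\<rho> t) \<rho>' t)"
  unfolding is_solution_def rhs_def ..

lemma rhs_eq:
  "rhs r u t =
     (b * (- uL) - c - Lpath a b L0 t * c
       + b * DL * integral {0..t} (\<lambda>s. exp (- b * s) * u s) - wH t * a * (1 - r))
     / (wH t + wL t)"
  unfolding rhs_def wH_def wL_def by (simp add: mult_ac)

lemma rhs_diff:
  "rhs r1 u1 t - rhs r2 u2 t =
     (b * DL * (integral {0..t} (\<lambda>s. exp (- b * s) * u1 s)
                - integral {0..t} (\<lambda>s. exp (- b * s) * u2 s))
      + wH t * a * (r1 - r2)) / (wH t + wL t)"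
  unfolding rhs_eq diff_divide_distrib[symmetric] by (simp add: algebra_simps)

lemma abs_rhs_diff_le:
  assumes "b < M" and "0 \<le> t"
    and u1: "continuous_on {0..t} u1" and u2: "continuous_on {0..t} u2"
    and bound: "\<And>s. s \<in> {0..t} \<Longrightarrow> \<bar>u1 s - u2 s\<bar> \<le> m * exp (M * s)"
    and r: "r1 - r2 = integral {0..t} (\<lambda>s. u1 s - u2 s)"
  shows "\<bar>rhs r1 u1 t - rhs r2 u2 t\<bar> \<le> (b / (M - b) + a / M) * m * exp (M * t)"
proof -
  have M: "0 < M" using \<open>b < M\<close> b_pos by simp
  have m: "0 \<le> m" using bound[of 0] \<open>0 \<le> t\<close> abs_ge_zero[of "u1 0 - u2 0"] by simp
  have ud: "continuous_on {0..t} (\<lambda>s. u1 s - u2 s)" by (intro continuous_intros u1 u2)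
  define d where "d = integral {0..t} (\<lambda>s. exp (- b * s) * u1 s)
                      - integral {0..t} (\<lambda>s. exp (- b * s) * u2 s)"
  have "d = integral {0..t} (\<lambda>s. exp (- b * s) * (u1 s - u2 s))"
    unfolding d_def right_diff_distrib
    by (intro integral_diff[symmetric] integrable_continuous_interval continuous_intros u1 u2)
  then have d_le: "\<bar>d\<bar> \<le> m * exp ((M - b) * t) / (M - b)"
    using abs_integral_exp_weighted_le[OF \<open>b < M\<close> \<open>0 \<le> t\<close> ud bound] by simp
  have r_le: "\<bar>r1 - r2\<bar> \<le> m * exp (M * t) / M"
    using abs_integral_exp_weighted_le[of 0 M, OF M \<open>0 \<le> t\<close> ud bound] r by simp
  have "\<bar>rhs r1 u1 t - rhs r2 u2 t\<bar>
        \<le> b * DL * \<bar>d\<bar> / (wH t + wL t) + wH t * a * \<bar>r1 - r2\<bar> / (wH t + wL t)"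
    unfolding rhs_diff d_def[symmetric] add_divide_distrib[symmetric]
    using wH_pos[of t] wL_pos[of t] a_pos b_pos DL_pos
    by (simp add: divide_right_mono abs_triangle_ineq[THEN order_trans] abs_mult)
  also have "b * DL * \<bar>d\<bar> / (wH t + wL t) \<le> b * DL * \<bar>d\<bar> / wL t"
    using wH_pos[of t] wL_pos[of t] b_pos DL_pos by (intro divide_left_mono) auto
  also have "\<dots> \<le> b * DL * (m * exp ((M - b) * t) / (M - b)) / wL t"
    using d_le wL_pos[of t] b_pos DL_pos by (intro divide_right_mono mult_left_mono) auto
  also have "\<dots> = b / (M - b) * m * exp (M * t)"
    unfolding wL_def using DL_pos \<open>b < M\<close> by (simp add: field_simps left_diff_distrib exp_diff exp_minus)
  also have "wH t * a * \<bar>r1 - r2\<bar> / (wH t + wL t) \<le> wH t * a * \<bar>r1 - r2\<bar> / wH t"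
    using wH_pos[of t] wL_pos[of t] a_pos by (intro divide_left_mono) auto
  also have "\<dots> \<le> a / M * m * exp (M * t)"
    using r_le wH_pos[of t] a_pos M by (simp add: field_simps)
  finally show ?thesis by (simp add: algebra_simps)
qed

lemma abs_rhs_zero_le:
  assumes "0 \<le> t"
  shows "\<bar>rhs 0 (\<lambda>_. 0) t\<bar>
         \<le> (\<bar>b * (- uL) - c\<bar> + L0 * \<bar>c\<bar> + L0 * DH * a) / DL * exp (2 * b * t)"
proof -
  define C where "C = \<bar>b * (- uL) - c\<bar> + L0 * \<bar>c\<bar> + L0 * DH * a"
  have e: "1 \<le> exp (b * t)" using assms b_pos by simp
  have "(b - a) * t \<le> b * t" using assms a_pos by (simp add: algebra_simps)
  then have L: "Lpath a b L0 t \<le> L0 * exp (b * t)"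
    using L0_pos by (simp add: Lpath_def)
  have H: "wH t \<le> L0 * DH * exp (b * t)"
    using assms a_pos L0_pos DH_pos
    by (simp add: wH_def Lpath_def mult.assoc flip: exp_add) (simp add: algebra_simps)
  have "\<bar>b * (- uL) - c - Lpath a b L0 t * c - wH t * a\<bar>
        \<le> \<bar>b * (- uL) - c\<bar> + Lpath a b L0 t * \<bar>c\<bar> + wH t * a"
    using wH_pos[of t] a_pos L0_pos
    by (auto simp: Lpath_def abs_mult intro!: abs_triangle_ineq4[THEN order_trans])
  also have "\<dots> \<le> C * exp (b * t)"
  proof -
    have "\<bar>b * (- uL) - c\<bar> \<le> \<bar>b * (- uL) - c\<bar> * exp (b * t)"
      using mult_left_mono[OF e, of "\<bar>b * (- uL) - c\<bar>"] by simp
    moreover have "Lpath a b L0 t * \<bar>c\<bar> \<le> L0 * exp (b * t) * \<bar>c\<bar>"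
      using L by (simp add: mult_right_mono)
    moreover have "wH t * a \<le> L0 * DH * exp (b * t) * a"
      using H a_pos by simp
    ultimately show ?thesis by (simp add: C_def algebra_simps)
  qed
  finally have num: "\<bar>b * (- uL) - c - Lpath a b L0 t * c - wH t * a\<bar> \<le> C * exp (b * t)" .
  have "rhs 0 (\<lambda>_. 0) t = (b * (- uL) - c - Lpath a b L0 t * c - wH t * a) / (wH t + wL t)"
    unfolding rhs_eq by simp
  also have "\<bar>\<dots>\<bar> \<le> C * exp (b * t) / wL t"
    using num wH_pos[of t] wL_pos[of t] by (simp add: abs_divide) (intro frac_le, auto)
  also have "\<dots> = C / DL * exp (2 * b * t)"
    unfolding wL_def using DL_pos by (simp add: exp_minus field_simps flip: exp_add)
  finally show ?thesis by (simp add: C_def)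
qed

definition rate :: real where
  "rate = 4 * (a + b)"

definition lip :: real where
  "lip = b / (rate - b) + a / rate"

lemma b_less_rate: "b < rate" and twice_b_le_rate: "2 * b \<le> rate"
  using a_pos b_pos by (auto simp: rate_def)

lemma lip_nonneg: "0 \<le> lip" and lip_less_1: "lip < 1"
proof -
  have "b / (rate - b) < 1 / 3" and "a / rate < 1 / 4"
    using a_pos b_pos by (simp_all add: rate_def field_simps)
  then show "lip < 1" unfolding lip_def by linarith
  show "0 \<le> lip" unfolding lip_def using a_pos b_pos b_less_rate by simp
qed

text \<open>
  A bounded continuous w stands for the derivative exp(rate s) w(s); clamping time at 0
  lets the operator act on functions on the whole real line.
\<close>

definition scaled :: "(real \<Rightarrow>\<^sub>C real) \<Rightarrow> real \<Rightarrow> real" where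
  "scaled w s = exp (rate * s) * w s"

definition picard :: "(real \<Rightarrow>\<^sub>C real) \<Rightarrow> real \<Rightarrow> real" where
  "picard w t =
     exp (- rate * max 0 t) * rhs (integral {0..max 0 t} (scaled w)) (scaled w) (max 0 t)"

lemma continuous_on_scaled: "continuous_on S (scaled w)"
  unfolding scaled_def by (auto intro!: continuous_intros)

lemma scaled_0: "scaled 0 = (\<lambda>_. 0)"
  by (simp add: scaled_def fun_eq_iff)

lemma continuous_on_picard: "continuous_on UNIV (picard w)"
proof -
  have "L0 * exp ((b - a) * max 0 t) * DH * exp (- (a * max 0 t)) + DL * exp (- (b * max 0 t)) \<noteq> 0"
    for t
    using wH_pos[of "max 0 t"] wL_pos[of "max 0 t"]
    by (simp add: wH_def wL_def Lpath_def add_pos_pos)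
  then show ?thesis
    unfolding picard_def rhs_def Lpath_def
    by (auto intro!: continuous_intros continuous_on_integral_max0 continuous_on_scaled)
qed

lemma abs_picard_diff_le: "\<bar>picard w1 t - picard w2 t\<bar> \<le> lip * dist w1 w2"
proof -
  define t' where "t' = max 0 t"
  have "0 \<le> t'" by (simp add: t'_def)
  have "\<bar>rhs (integral {0..t'} (scaled w1)) (scaled w1) t'
          - rhs (integral {0..t'} (scaled w2)) (scaled w2) t'\<bar>
        \<le> lip * dist w1 w2 * exp (rate * t')"
    unfolding lip_def
  proof (rule abs_rhs_diff_le[OF b_less_rate \<open>0 \<le> t'\<close> continuous_on_scaled continuous_on_scaled])
    fix s
    have "\<bar>scaled w1 s - scaled w2 s\<bar> = exp (rate * s) * dist (w1 s) (w2 s)"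
      unfolding scaled_def dist_real_def by (simp add: abs_mult right_diff_distrib[symmetric])
    also have "\<dots> \<le> exp (rate * s) * dist w1 w2"
      by (intro mult_left_mono dist_bounded) auto
    finally show "\<bar>scaled w1 s - scaled w2 s\<bar> \<le> dist w1 w2 * exp (rate * s)"
      by (simp add: mult.commute)
  next
    show "integral {0..t'} (scaled w1) - integral {0..t'} (scaled w2)
          = integral {0..t'} (\<lambda>s. scaled w1 s - scaled w2 s)"
      by (intro integral_diff[symmetric] integrable_continuous_interval continuous_on_scaled)
  qed
  then have "exp (- rate * t') * \<bar>rhs (integral {0..t'} (scaled w1)) (scaled w1) t'
               - rhs (integral {0..t'} (scaled w2)) (scaled w2) t'\<bar>
             \<le> exp (- rate * t') * (lip * dist w1 w2 * exp (rate * t'))"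
    by (rule mult_left_mono) simp
  then show ?thesis
    unfolding picard_def t'_def[symmetric]
    by (simp add: abs_mult right_diff_distrib[symmetric] exp_minus field_simps)
qed

lemma abs_picard_le:
  "\<bar>picard w t\<bar> \<le> (\<bar>b * (- uL) - c\<bar> + L0 * \<bar>c\<bar> + L0 * DH * a) / DL + lip * norm w"
proof -
  define t' where "t' = max 0 t"
  have "0 \<le> t'" by (simp add: t'_def)
  have "\<bar>picard 0 t\<bar> = exp (- rate * t') * \<bar>rhs 0 (\<lambda>_. 0) t'\<bar>"
    by (simp add: picard_def scaled_0 t'_def abs_mult)
  also have "\<dots> \<le> exp (- rate * t')
                  * ((\<bar>b * (- uL) - c\<bar> + L0 * \<bar>c\<bar> + L0 * DH * a) / DL * exp (2 * b * t'))"
    by (intro mult_left_mono abs_rhs_zero_le \<open>0 \<le> t'\<close>) simp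
  also have "\<dots> = (\<bar>b * (- uL) - c\<bar> + L0 * \<bar>c\<bar> + L0 * DH * a) / DL * exp ((2 * b - rate) * t')"
    by (simp add: algebra_simps flip: exp_add)
  also have "\<dots> \<le> (\<bar>b * (- uL) - c\<bar> + L0 * \<bar>c\<bar> + L0 * DH * a) / DL"
    using twice_b_le_rate \<open>0 \<le> t'\<close> a_pos DH_pos DL_pos L0_pos
    by (intro mult_left_le) (auto simp: mult_nonpos_nonneg)
  finally have "\<bar>picard 0 t\<bar> \<le> (\<bar>b * (- uL) - c\<bar> + L0 * \<bar>c\<bar> + L0 * DH * a) / DL" .
  moreover have "\<bar>picard w t - picard 0 t\<bar> \<le> lip * norm w"
    using abs_picard_diff_le[of w t 0] by (simp add: dist_norm)
  ultimately show ?thesis by linarith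
qed

lemma picard_in_bcontfun: "picard w \<in> bcontfun"
  using continuous_on_picard abs_picard_le by (intro bcontfun_normI) auto

lemma picard_fixpoint_is_solution:
  assumes "apply_bcontfun w = picard w"
  shows "is_solution a b c uL DH DL L0 (\<lambda>t. integral {0..t} (scaled w)) (scaled w)"
  unfolding is_solution_iff
proof (intro conjI allI impI)
  show "continuous_on {0..} (scaled w)" by (rule continuous_on_scaled)
next
  fix t :: real assume "0 \<le> t"
  have "((\<lambda>t. integral {0..t} (scaled w)) has_real_derivative scaled w t) (at t within {0..t + 1})"
    using \<open>0 \<le> t\<close> by (intro integral_has_real_derivative continuous_on_scaled) auto
  moreover have "at t within {0..t + 1} = at t within {0..}"
    by (rule at_within_nhd[of _ "{..<t + 1}"]) auto
  ultimately show "((\<lambda>t. integral {0..t} (scaled w)) has_real_derivative scaled w t) (at t within {0..})"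
    by simp
  show "scaled w t = rhs (integral {0..t} (scaled w)) (scaled w) t"
    using \<open>0 \<le> t\<close> fun_cong[OF assms, of t]
    by (simp add: scaled_def picard_def exp_minus field_simps)
qed simp

lemma solution_exists: "\<exists>\<rho> \<rho>'. is_solution a b c uL DH DL L0 \<rho> \<rho>'"
proof -
  have "\<exists>!w. Bcontfun (picard w) = w"
  proof (rule banach_fix_type[OF lip_nonneg lip_less_1], intro allI)
    fix w1 w2
    show "dist (Bcontfun (picard w1)) (Bcontfun (picard w2)) \<le> lip * dist w1 w2"
      using abs_picard_diff_le
      by (intro dist_bound) (simp add: Bcontfun_inverse picard_in_bcontfun dist_real_def)
  qed
  then obtain w where "Bcontfun (picard w) = w" by blast
  then have "apply_bcontfun w = picard w"
    by (metis Bcontfun_inverse picard_in_bcontfun)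
  then show ?thesis by (blast intro: picard_fixpoint_is_solution)
qed

lemma solution_derivative_unique:
  assumes s1: "is_solution a b c uL DH DL L0 \<rho>1 \<rho>1'"
    and s2: "is_solution a b c uL DH DL L0 \<rho>2 \<rho>2'"
    and "0 \<le> T" and "s \<in> {0..T}"
  shows "\<rho>1' s = \<rho>2' s"
proof -
  define g where "g s = exp (- rate * s) * \<bar>\<rho>1' s - \<rho>2' s\<bar>" for s
  have "continuous_on {0..T} g"
    unfolding g_def
    by (intro continuous_intros is_solution_integral(2)[OF s1 \<open>0 \<le> T\<close>]
        is_solution_integral(2)[OF s2 \<open>0 \<le> T\<close>])
  then obtain x where x: "x \<in> {0..T}" and max: "\<And>y. y \<in> {0..T} \<Longrightarrow> g y \<le> g x"
    using continuous_attains_sup[of "{0..T}" g] \<open>0 \<le> T\<close> by auto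
  have bound: "\<bar>\<rho>1' y - \<rho>2' y\<bar> \<le> g x * exp (rate * y)" if "y \<in> {0..T}" for y
    using max[OF that] by (simp add: g_def exp_minus field_simps)
  have "g y \<le> lip * g x" if y: "y \<in> {0..T}" for y
  proof -
    have "0 \<le> y" using y by simp
    note sol1 = is_solution_integral[OF s1 \<open>0 \<le> y\<close>] and sol2 = is_solution_integral[OF s2 \<open>0 \<le> y\<close>]
    have "\<bar>\<rho>1' y - \<rho>2' y\<bar> = \<bar>rhs (\<rho>1 y) \<rho>1' y - rhs (\<rho>2 y) \<rho>2' y\<bar>"
      using s1 s2 \<open>0 \<le> y\<close> by (simp add: is_solution_iff)
    also have "\<dots> \<le> lip * g x * exp (rate * y)"
      unfolding lip_def
    proof (rule abs_rhs_diff_le[OF b_less_rate \<open>0 \<le> y\<close> sol1(2) sol2(2)])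
      show "\<And>s. s \<in> {0..y} \<Longrightarrow> \<bar>\<rho>1' s - \<rho>2' s\<bar> \<le> g x * exp (rate * s)"
        using bound y by auto
      show "\<rho>1 y - \<rho>2 y = integral {0..y} (\<lambda>s. \<rho>1' s - \<rho>2' s)"
        unfolding sol1(1) sol2(1)
        by (intro integral_diff[symmetric] integrable_continuous_interval sol1(2) sol2(2))
    qed
    finally show ?thesis by (simp add: g_def exp_minus field_simps)
  qed
  then have "g x \<le> lip * g x" using x by blast
  then have "(1 - lip) * g x \<le> 0" by (simp add: algebra_simps)
  then have "g x \<le> 0" using lip_less_1 by (simp add: mult_le_0_iff)
  then have "g s \<le> 0" using max \<open>s \<in> {0..T}\<close> by force
  then show ?thesis by (simp add: g_def mult_le_0_iff)
qed

lemma solution_unique: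
  assumes "is_solution a b c uL DH DL L0 \<rho>1 \<rho>1'"
    and "is_solution a b c uL DH DL L0 \<rho>2 \<rho>2'" and "0 \<le> t"
  shows "\<rho>1 t = \<rho>2 t"
  unfolding is_solution_integral(1)[OF assms(1,3)] is_solution_integral(1)[OF assms(2,3)]
  using solution_derivative_unique[OF assms(1,2,3)] by (intro integral_cong) auto

end

theorem lemma4:
  fixes a b c uL DH DL L0 :: real
  assumes "b > a" and "a > 0" and "c > 0" and "uL < 0"
    and "DH > 0" and "DL > 0" and "L0 > 0"
  shows "(\<exists>\<rho> \<rho>'. is_solution a b c uL DH DL L0 \<rho> \<rho>') \<and>
         (\<forall>\<rho>1 \<rho>1' \<rho>2 \<rho>2'. is_solution a b c uL DH DL L0 \<rho>1 \<rho>1' \<and>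
              is_solution a b c uL DH DL L0 \<rho>2 \<rho>2' \<longrightarrow>
              (\<forall>t\<ge>0. \<rho>1 t = \<rho>2 t))"
proof -
  interpret ide_coefficients a b c uL DH DL L0
    using assms by unfold_locales auto
  show ?thesis using solution_exists solution_unique by blast
qed

end
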